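(* Let $S$ be a compact, metrizable, separable space, let $A$ be the generator of a Feller semigroup on $C(S)$ with resolvent $R_\lambda=(\lambda-A)^{-1}$, and let $\ell_\lambda$, $\lambda>0$, be the Laplace transform of an exit law for $A$. Then $\lim_{\lambda\to\infty}\ell_\lambda=0$ in the norm of $C(S)$.
   Context: A Feller semigroup is a strongly continuous semigroup of positive contractions on $C(S)$ (real continuous functions, sup norm) with $T(0)=I$, not necessarily conservative. A family $\ell_\lambda$, $\lambda>0$, is the Laplace transform of an exit law for $A$ if: (a) $(0,\infty)\ni\lambda\mapsto\ell_\lambda\in C(S)$ is locally bounded, non-negative and $\ell_\lambda\neq0$ for at least one $\lambda$; (b) $\lim_{\lambda\to0+}\ell_\lambda(x)\le1$ for each $x\in S$; (c) $(\lambda-\mu)R_\lambda\ell_\mu=\ell_\mu-\ell_\lambda$ for all $\lambda,\mu>0$. *)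

theory Defs
  imports "HOL-Analysis.Analysis"
begin

text \<open>C(S) is modelled as the Banach space of (bounded) continuous real functions
  with the sup norm; on a compact space every continuous function is bounded.\<close>

definition feller_semigroup :: "(real \<Rightarrow> ('a::topological_space \<Rightarrow>\<^sub>C real) \<Rightarrow> ('a \<Rightarrow>\<^sub>C real)) \<Rightarrow> bool" where
  "feller_semigroup T \<longleftrightarrow>
     (\<forall>t\<ge>0. linear (T t)) \<and>
     T 0 = id \<and>
     (\<forall>s\<ge>0. \<forall>t\<ge>0. T (s + t) = T s \<circ> T t) \<and>
     (\<forall>f. ((\<lambda>t. T t f) \<longlongrightarrow> f) (at_right 0)) \<and>
     (\<forall>t\<ge>0. \<forall>f. (\<forall>x. 0 \<le> apply_bcontfun f x) \<longrightarrow> (\<forall>x. 0 \<le> apply_bcontfun (T t f) x)) \<and>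
     (\<forall>t\<ge>0. \<forall>f. norm (T t f) \<le> norm f)"

definition gen_dom :: "(real \<Rightarrow> ('a::topological_space \<Rightarrow>\<^sub>C real) \<Rightarrow> ('a \<Rightarrow>\<^sub>C real)) \<Rightarrow> ('a \<Rightarrow>\<^sub>C real) set" where
  "gen_dom T = {f. \<exists>g. ((\<lambda>h. (1 / h) *\<^sub>R (T h f - f)) \<longlongrightarrow> g) (at_right 0)}"

definition gen :: "(real \<Rightarrow> ('a::topological_space \<Rightarrow>\<^sub>C real) \<Rightarrow> ('a \<Rightarrow>\<^sub>C real)) \<Rightarrow> ('a \<Rightarrow>\<^sub>C real) \<Rightarrow> ('a \<Rightarrow>\<^sub>C real)" where
  "gen T f = (THE g. ((\<lambda>h. (1 / h) *\<^sub>R (T h f - f)) \<longlongrightarrow> g) (at_right 0))"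

definition resolvent :: "(real \<Rightarrow> ('a::topological_space \<Rightarrow>\<^sub>C real) \<Rightarrow> ('a \<Rightarrow>\<^sub>C real)) \<Rightarrow> real \<Rightarrow> ('a \<Rightarrow>\<^sub>C real) \<Rightarrow> ('a \<Rightarrow>\<^sub>C real)" where
  "resolvent T lam f = (THE g. g \<in> gen_dom T \<and> lam *\<^sub>R g - gen T g = f)"

definition exit_law_LT :: "(real \<Rightarrow> ('a::topological_space \<Rightarrow>\<^sub>C real) \<Rightarrow> ('a \<Rightarrow>\<^sub>C real)) \<Rightarrow> (real \<Rightarrow> ('a \<Rightarrow>\<^sub>C real)) \<Rightarrow> bool" where
  "exit_law_LT T l \<longleftrightarrow>
     (\<forall>a b. 0 < a \<longrightarrow> a \<le> b \<longrightarrow> bounded (l ` {a..b})) \<and>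
     (\<forall>lam>0. \<forall>x. 0 \<le> apply_bcontfun (l lam) x) \<and>
     (\<exists>lam>0. l lam \<noteq> 0) \<and>
     (\<forall>x. \<exists>L. ((\<lambda>lam. apply_bcontfun (l lam) x) \<longlongrightarrow> L) (at_right 0) \<and> L \<le> 1) \<and>
     (\<forall>lam>0. \<forall>mu>0. (lam - mu) *\<^sub>R resolvent T lam (l mu) = l mu - l lam)"

end

theory Submission
  imports Defs "HOL-Real_Asymp.Real_Asymp"
begin

text \<open>With \<open>u = \<ell>\<^sub>1\<close>, the resolvent equation for \<open>\<mu> = 1\<close> reads
  \<open>\<ell>\<^sub>\<lambda> = (u - \<lambda> R\<^sub>\<lambda> u) + R\<^sub>\<lambda> u\<close>, so it suffices that \<open>\<lambda> R\<^sub>\<lambda> u \<rightarrow> u\<close> and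
  \<open>R\<^sub>\<lambda> u \<rightarrow> 0\<close> as \<open>\<lambda> \<rightarrow> \<infinity>\<close>. The resolvent is the Laplace transform
  \<open>R\<^sub>\<lambda> f = \<integral>\<^sub>0\<^sup>\<infinity> e\<^sup>-\<^sup>\<lambda>\<^sup>t T\<^sub>t f dt\<close>: this integral lies in the domain of the generator and
  solves \<open>(\<lambda> - A) g = f\<close>, and the solution is unique because \<open>A\<close> is dissipative,
  \<open>\<lambda> \<parallel>g\<parallel> \<le> \<parallel>(\<lambda> - A) g\<parallel>\<close>. Dissipativity also gives \<open>\<lambda> \<parallel>R\<^sub>\<lambda> u\<parallel> \<le> \<parallel>u\<parallel>\<close>, while
  \<open>\<lambda> R\<^sub>\<lambda> u - u = \<integral>\<^sub>0\<^sup>\<infinity> \<lambda> e\<^sup>-\<^sup>\<lambda>\<^sup>t (T\<^sub>t u - u) dt\<close> tends to \<open>0\<close> by strong continuity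
  at \<open>t = 0\<close>.\<close>

instance bcontfun :: (metric_space, banach) banach ..

lemma tendsto_Lim_at_top_of_Cauchy_bound:
  fixes g :: "real \<Rightarrow> 'b::complete_space"
  assumes cauchy: "\<And>a b. lo \<le> a \<Longrightarrow> a \<le> b \<Longrightarrow> dist (g b) (g a) \<le> c a"
    and c: "(c \<longlongrightarrow> 0) at_top"
  shows "(g \<longlongrightarrow> Lim at_top g) at_top"
    and "lo \<le> a \<Longrightarrow> dist (Lim at_top g) (g a) \<le> c a"
proof -
  have "cauchy_filter (filtermap g at_top)"
    unfolding cauchy_filter_metric_filtermap
  proof (intro allI impI)
    fix e :: real assume "e > 0"
    then have "eventually (\<lambda>a. lo \<le> a \<and> c a < e / 2) at_top"
      using c by (intro eventually_conj eventually_ge_at_top order_tendstoD(2)) auto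
    then obtain M where M: "lo \<le> M" "c M < e / 2"
      by (auto simp: eventually_at_top_linorder)
    have "dist (g x) (g y) < e" if "M \<le> x" "M \<le> y" for x y
      using dist_triangle2[of "g x" "g y" "g M"] cauchy[OF M(1) that(1)] cauchy[OF M(1) that(2)] M(2)
      by linarith
    then show "\<exists>P. eventually P at_top \<and> (\<forall>x y. P x \<and> P y \<longrightarrow> dist (g x) (g y) < e)"
      by (intro exI[of _ "\<lambda>x. M \<le> x"]) (auto simp: eventually_ge_at_top)
  qed
  then obtain L where "filtermap g at_top \<le> nhds L"
    by (rule cauchy_filter_complete_converges[OF _ complete_UNIV, elim_format])
       (auto simp: filtermap_bot_iff)
  then show lim: "(g \<longlongrightarrow> Lim at_top g) at_top"
    by (metis filterlim_def tendsto_Lim trivial_limit_at_top_linorder)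
  show "dist (Lim at_top g) (g a) \<le> c a" if "lo \<le> a"
  proof (rule tendsto_upperbound)
    show "((\<lambda>b. dist (g b) (g a)) \<longlongrightarrow> dist (Lim at_top g) (g a)) at_top"
      by (intro tendsto_intros lim)
    show "eventually (\<lambda>b. dist (g b) (g a) \<le> c a) at_top"
      using eventually_ge_at_top[of a] by eventually_elim (use cauchy that in auto)
  qed simp
qed

lemma has_integral_exp_decay:
  fixes lam :: real
  assumes "a \<le> b" "lam \<noteq> 0"
  shows "((\<lambda>t. lam * exp (-lam * t)) has_integral exp (-lam * a) - exp (-lam * b)) {a..b}"
proof -
  have "((\<lambda>t. lam * exp (-lam * t)) has_integral (- exp (-lam * b)) - (- exp (-lam * a))) {a..b}"
    using assms
    by (intro fundamental_theorem_of_calculus)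
       (auto intro!: derivative_eq_intros simp: has_real_derivative_iff_has_vector_derivative[symmetric])
  then show ?thesis by simp
qed

lemma norm_integral_le_exp_decay:
  fixes g :: "real \<Rightarrow> 'b::banach"
  assumes "g integrable_on {a..b}" "a \<le> b" "lam > 0"
    and "\<And>t. t \<in> {a..b} \<Longrightarrow> norm (g t) \<le> lam * exp (-lam * t) * c"
  shows "norm (integral {a..b} g) \<le> (exp (-lam * a) - exp (-lam * b)) * c"
proof -
  have bound: "((\<lambda>t. lam * exp (-lam * t) * c) has_integral (exp (-lam * a) - exp (-lam * b)) * c) {a..b}"
    using has_integral_mult_left[OF has_integral_exp_decay] assms(2,3) by auto
  have "norm (integral {a..b} g) \<le> integral {a..b} (\<lambda>t. lam * exp (-lam * t) * c)"
    by (rule integral_norm_bound_integral[OF assms(1) has_integral_integrable[OF bound] assms(4)])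
  also have "\<dots> = (exp (-lam * a) - exp (-lam * b)) * c"
    by (rule integral_unique[OF bound])
  finally show ?thesis .
qed

lemma gen_eqI:
  assumes "((\<lambda>h. (1 / h) *\<^sub>R (T h w - w)) \<longlongrightarrow> a) (at_right 0)"
  shows "w \<in> gen_dom T" and "gen T w = a"
proof -
  show "w \<in> gen_dom T"
    unfolding gen_dom_def using assms by blast
  show "gen T w = a"
    unfolding gen_def
  proof (rule the_equality)
    fix b assume "((\<lambda>h. (1 / h) *\<^sub>R (T h w - w)) \<longlongrightarrow> b) (at_right 0)"
    then show "b = a"
      by (rule tendsto_unique[OF trivial_limit_at_right_real _ assms])
  qed (rule assms)
qed

lemma gen_tendsto:
  assumes "w \<in> gen_dom T"
  shows "((\<lambda>h. (1 / h) *\<^sub>R (T h w - w)) \<longlongrightarrow> gen T w) (at_right 0)"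
proof -
  obtain a where a: "((\<lambda>h. (1 / h) *\<^sub>R (T h w - w)) \<longlongrightarrow> a) (at_right 0)"
    using assms unfolding gen_dom_def by blast
  with gen_eqI(2)[where T=T and w=w, OF a] show ?thesis by simp
qed

type_synonym 'a operator_family = "real \<Rightarrow> ('a \<Rightarrow>\<^sub>C real) \<Rightarrow> ('a \<Rightarrow>\<^sub>C real)"

definition laplace_partial ::
    "('a::metric_space) operator_family \<Rightarrow> real \<Rightarrow> ('a \<Rightarrow>\<^sub>C real) \<Rightarrow> real \<Rightarrow> ('a \<Rightarrow>\<^sub>C real)"
  where "laplace_partial T lam f x = integral {0..x} (\<lambda>t. exp (-lam * t) *\<^sub>R T t f)"

definition laplace ::
    "('a::metric_space) operator_family \<Rightarrow> real \<Rightarrow> ('a \<Rightarrow>\<^sub>C real) \<Rightarrow> ('a \<Rightarrow>\<^sub>C real)"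
  where "laplace T lam f = Lim at_top (laplace_partial T lam f)"

context
  fixes T :: "('a::metric_space) operator_family"
  assumes feller: "feller_semigroup T"
begin

lemma feller_zero: "T 0 f = f"
  using feller unfolding feller_semigroup_def by simp

lemma feller_contraction: "0 \<le> t \<Longrightarrow> norm (T t f) \<le> norm f"
  using feller unfolding feller_semigroup_def by simp

lemma feller_semigroup_law: "0 \<le> s \<Longrightarrow> 0 \<le> t \<Longrightarrow> T s (T t f) = T (s + t) f"
  using feller unfolding feller_semigroup_def by (metis comp_apply)

lemma feller_tendsto_at_right_0: "((\<lambda>t. T t f) \<longlongrightarrow> f) (at_right 0)"
  using feller unfolding feller_semigroup_def by simp

lemma feller_bounded_linear: "0 \<le> t \<Longrightarrow> bounded_linear (T t)"
  using feller feller_contraction unfolding feller_semigroup_def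
  by (intro bounded_linear_intro[where K=1]) (auto simp: linear_add linear_scale)

lemma feller_diff: "0 \<le> t \<Longrightarrow> T t (f - g) = T t f - T t g"
  using linear_diff[OF bounded_linear.linear[OF feller_bounded_linear]] .

lemma feller_modulus_at_0:
  assumes "e > 0"
  obtains d where "d > 0" "\<And>h. 0 \<le> h \<Longrightarrow> h \<le> d \<Longrightarrow> norm (T h f - f) < e"
proof -
  obtain d where d: "d > 0" "\<And>h. 0 < h \<Longrightarrow> h < d \<Longrightarrow> dist (T h f) f < e"
    using tendstoD[OF feller_tendsto_at_right_0 assms] by (auto simp: eventually_at_right_field)
  have "norm (T h f - f) < e" if "0 \<le> h" "h \<le> d / 2" for h
    using d that assms feller_zero by (cases "h = 0") (auto simp: dist_norm)
  with d(1) show thesis by (intro that[of "d / 2"]) auto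
qed

lemma feller_dist_orbit_le: "0 \<le> s \<Longrightarrow> s \<le> t \<Longrightarrow> dist (T t f) (T s f) \<le> norm (T (t - s) f - f)"
  using feller_contraction[of s "T (t - s) f - f"]
  by (simp add: dist_norm feller_diff feller_semigroup_law)

lemma feller_orbit_continuous: "continuous_on {0..} (\<lambda>t. T t f)"
  unfolding continuous_on_iff
proof (intro ballI allI impI)
  fix s e :: real assume s: "s \<in> {0..}" and "e > 0"
  then obtain d where d: "d > 0" "\<And>h. 0 \<le> h \<Longrightarrow> h \<le> d \<Longrightarrow> norm (T h f - f) < e"
    using feller_modulus_at_0 by blast
  have "dist (T t f) (T s f) < e" if "t \<in> {0..}" "dist t s < d" for t
  proof (cases "s \<le> t")
    case True
    then show ?thesis
      using feller_dist_orbit_le[of s t f] d(2)[of "t - s"] s that by (auto simp: dist_real_def)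
  next
    case False
    then show ?thesis
      using feller_dist_orbit_le[of t s f] d(2)[of "s - t"] that by (auto simp: dist_real_def dist_commute)
  qed
  with d(1) show "\<exists>d>0. \<forall>t\<in>{0..}. dist t s < d \<longrightarrow> dist (T t f) (T s f) < e"
    by blast
qed

lemma feller_dissipative:
  assumes "0 \<le> lam" and lim: "((\<lambda>h. (1 / h) *\<^sub>R (T h w - w)) \<longlongrightarrow> a) (at_right 0)"
  shows "lam * norm w \<le> norm (lam *\<^sub>R w - a)"
proof (rule tendsto_lowerbound)
  show "((\<lambda>h. norm (lam *\<^sub>R w - (1 / h) *\<^sub>R (T h w - w))) \<longlongrightarrow> norm (lam *\<^sub>R w - a)) (at_right 0)"
    by (intro tendsto_intros lim)
  show "\<forall>\<^sub>F h in at_right 0. lam * norm w \<le> norm (lam *\<^sub>R w - (1 / h) *\<^sub>R (T h w - w))"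
    using eventually_at_right_less[of "0::real"]
  proof eventually_elim
    case (elim h)
    have "lam * norm w = (lam + 1 / h) * norm w - (1 / h) * norm w"
      by (simp add: algebra_simps)
    also have "\<dots> \<le> norm ((lam + 1 / h) *\<^sub>R w) - norm ((1 / h) *\<^sub>R T h w)"
      using feller_contraction[of h w] elim assms(1) by (simp add: divide_right_mono)
    also have "\<dots> \<le> norm ((lam + 1 / h) *\<^sub>R w - (1 / h) *\<^sub>R T h w)"
      by (rule norm_triangle_ineq2)
    finally show ?case by (simp add: algebra_simps)
  qed
qed simp

lemma feller_generator_no_positive_eigenvalue:
  assumes "lam > 0" and "((\<lambda>h. (1 / h) *\<^sub>R (T h v - v)) \<longlongrightarrow> lam *\<^sub>R v) (at_right 0)"
  shows "v = 0"
  using feller_dissipative[OF less_imp_le[OF assms(1)] assms(2)] assms(1) by (simp add: mult_le_0_iff)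

lemma resolvent_eqI:
  assumes lam: "lam > 0" and w: "((\<lambda>h. (1 / h) *\<^sub>R (T h w - w)) \<longlongrightarrow> lam *\<^sub>R w - f) (at_right 0)"
  shows "resolvent T lam f = w"
  unfolding resolvent_def
proof (rule the_equality)
  show "w \<in> gen_dom T \<and> lam *\<^sub>R w - gen T w = f"
    using gen_eqI[where T=T and w=w, OF w] by simp
  fix g assume g: "g \<in> gen_dom T \<and> lam *\<^sub>R g - gen T g = f"
  have "((\<lambda>h. (1 / h) *\<^sub>R (T h g - g) - (1 / h) *\<^sub>R (T h w - w)) \<longlongrightarrow> gen T g - (lam *\<^sub>R w - f))
      (at_right 0)"
    using g by (intro tendsto_diff gen_tendsto w) auto
  also have "gen T g - (lam *\<^sub>R w - f) = lam *\<^sub>R (g - w)"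
    using g by (simp add: algebra_simps)
  finally have "((\<lambda>h. (1 / h) *\<^sub>R (T h (g - w) - (g - w))) \<longlongrightarrow> lam *\<^sub>R (g - w)) (at_right 0)"
  proof (rule Lim_transform_eventually)
    show "\<forall>\<^sub>F h in at_right 0. (1 / h) *\<^sub>R (T h g - g) - (1 / h) *\<^sub>R (T h w - w) =
        (1 / h) *\<^sub>R (T h (g - w) - (g - w))"
      using eventually_at_right_less[of "0::real"]
      by eventually_elim (simp add: feller_diff algebra_simps)
  qed
  then show "g = w"
    using feller_generator_no_positive_eigenvalue[OF lam, of "g - w"] by simp
qed

abbreviation "laplace_integrand lam f t \<equiv> exp (-lam * t) *\<^sub>R T t f"

lemma laplace_integrand_continuous: "continuous_on {0..} (laplace_integrand lam f)"
  by (intro continuous_intros feller_orbit_continuous)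

lemma laplace_integrand_integrable:
  assumes "0 \<le> a"
  shows "laplace_integrand lam f integrable_on {a..b}"
proof -
  have "continuous_on {a..b} (laplace_integrand lam f)"
    by (rule continuous_on_subset[OF laplace_integrand_continuous]) (use assms in auto)
  then show ?thesis
    by (rule integrable_continuous_interval)
qed

lemma laplace_partial_diff:
  assumes "0 \<le> a" "a \<le> b"
  shows "laplace_partial T lam f b - laplace_partial T lam f a =
    integral {a..b} (laplace_integrand lam f)"
  using Henstock_Kurzweil_Integration.integral_combine[OF assms
      laplace_integrand_integrable[OF order.refl, where lam=lam and f=f]]
  unfolding laplace_partial_def by (simp add: diff_eq_eq add.commute)

lemma dist_laplace_partial_le:
  assumes "lam > 0" "0 \<le> a" "a \<le> b"
  shows "dist (laplace_partial T lam f b) (laplace_partial T lam f a) \<le>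
    exp (-lam * a) * norm f / lam"
proof -
  have "norm (integral {a..b} (laplace_integrand lam f)) \<le>
      (exp (-lam * a) - exp (-lam * b)) * (norm f / lam)"
    using assms feller_contraction
    by (intro norm_integral_le_exp_decay laplace_integrand_integrable) (auto simp: mult_left_mono)
  also have "\<dots> \<le> exp (-lam * a) * (norm f / lam)"
    using assms by (intro mult_right_mono) auto
  finally show ?thesis
    using assms laplace_partial_diff by (simp add: dist_norm)
qed

lemma
  assumes "lam > 0"
  shows laplace_partial_tendsto: "(laplace_partial T lam f \<longlongrightarrow> laplace T lam f) at_top"
    and norm_laplace_minus_partial_le: "0 \<le> x \<Longrightarrow>
      norm (laplace T lam f - laplace_partial T lam f x) \<le> exp (-lam * x) * norm f / lam"
proof -
  have decay: "((\<lambda>a. exp (-lam * a) * norm f / lam) \<longlongrightarrow> 0) at_top"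
    using assms by real_asymp
  show "(laplace_partial T lam f \<longlongrightarrow> laplace T lam f) at_top"
    unfolding laplace_def
    by (rule tendsto_Lim_at_top_of_Cauchy_bound(1)[OF _ decay, of 0])
       (rule dist_laplace_partial_le[OF assms])
  show "norm (laplace T lam f - laplace_partial T lam f x) \<le> exp (-lam * x) * norm f / lam" if "0 \<le> x"
  proof -
    have "dist (Lim at_top (laplace_partial T lam f)) (laplace_partial T lam f x) \<le>
        exp (-lam * x) * norm f / lam"
      by (rule tendsto_Lim_at_top_of_Cauchy_bound(2)[OF _ decay that])
         (rule dist_laplace_partial_le[OF assms])
    then show ?thesis
      by (simp add: laplace_def dist_norm)
  qed
qed

lemma laplace_partial_shift:
  assumes h: "0 \<le> h" and x: "0 \<le> x"
  shows "T h (laplace_partial T lam f x) =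
    exp (lam * h) *\<^sub>R (laplace_partial T lam f (x + h) - laplace_partial T lam f h)"
proof -
  have "T h (laplace_partial T lam f x) = integral {0..x} (T h \<circ> laplace_integrand lam f)"
    unfolding laplace_partial_def
    by (rule integral_linear[symmetric, OF laplace_integrand_integrable feller_bounded_linear[OF h]]) simp
  also have "\<dots> = integral {0..x} (\<lambda>t. exp (lam * h) *\<^sub>R laplace_integrand lam f (t + h))"
  proof (rule integral_cong)
    fix t assume "t \<in> {0..x}"
    then have "T h (T t f) = T (t + h) f"
      using h feller_semigroup_law by (simp add: add.commute)
    then show "(T h \<circ> laplace_integrand lam f) t = exp (lam * h) *\<^sub>R laplace_integrand lam f (t + h)"
      using linear_scale[OF bounded_linear.linear[OF feller_bounded_linear[OF h]]]
      by (simp add: exp_add[symmetric] algebra_simps)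
  qed
  also have "\<dots> = exp (lam * h) *\<^sub>R integral {h - h..(x + h) - h} (\<lambda>t. laplace_integrand lam f (t + h))"
    by (simp only: integral_cmul diff_self add_diff_cancel_right')
  also have "\<dots> = exp (lam * h) *\<^sub>R integral {h..x + h} (laplace_integrand lam f)"
    by (simp only: integral_shift_real_ivl[of h h "x + h" "laplace_integrand lam f"])
  also have "\<dots> = exp (lam * h) *\<^sub>R (laplace_partial T lam f (x + h) - laplace_partial T lam f h)"
    using laplace_partial_diff[of h "x + h"] h x by simp
  finally show ?thesis .
qed

lemma laplace_shift:
  assumes lam: "lam > 0" and h: "0 \<le> h"
  shows "T h (laplace T lam f) = exp (lam * h) *\<^sub>R (laplace T lam f - laplace_partial T lam f h)"
proof (rule tendsto_unique[OF trivial_limit_at_top_linorder])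
  show "((\<lambda>x. T h (laplace_partial T lam f x)) \<longlongrightarrow> T h (laplace T lam f)) at_top"
    by (rule bounded_linear.tendsto[OF feller_bounded_linear[OF h] laplace_partial_tendsto[OF lam]])
  have "filterlim (\<lambda>x. x + h) at_top at_top"
    by real_asymp
  then have "((\<lambda>x. exp (lam * h) *\<^sub>R (laplace_partial T lam f (x + h) - laplace_partial T lam f h))
      \<longlongrightarrow> exp (lam * h) *\<^sub>R (laplace T lam f - laplace_partial T lam f h)) at_top"
    by (intro tendsto_intros filterlim_compose[OF laplace_partial_tendsto[OF lam]])
  then show "((\<lambda>x. T h (laplace_partial T lam f x))
      \<longlongrightarrow> exp (lam * h) *\<^sub>R (laplace T lam f - laplace_partial T lam f h)) at_top"
    by (rule Lim_transform_eventually)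
       (use eventually_ge_at_top[of 0] in \<open>eventually_elim, simp add: laplace_partial_shift h\<close>)
qed

lemma laplace_partial_quotient_tendsto:
  "((\<lambda>y. (1 / y) *\<^sub>R laplace_partial T lam f y) \<longlongrightarrow> f) (at_right 0)"
proof -
  have "continuous_on {0..1} (laplace_integrand lam f)"
    by (rule continuous_on_subset[OF laplace_integrand_continuous]) auto
  then have "(laplace_partial T lam f has_vector_derivative laplace_integrand lam f 0) (at 0 within {0..1})"
    unfolding laplace_partial_def[abs_def] by (rule integral_has_vector_derivative) auto
  then have "(laplace_partial T lam f has_vector_derivative f) (at_right 0)"
    using at_within_Icc_at_right[of "0::real" 1] feller_zero by simp
  then have "((\<lambda>y. (1 / norm (y - 0)) *\<^sub>R
      (laplace_partial T lam f y - (laplace_partial T lam f 0 + (y - 0) *\<^sub>R f))) \<longlongrightarrow> 0) (at_right 0)"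
    unfolding has_vector_derivative_def has_derivative_within by blast
  then have "((\<lambda>y. (1 / y) *\<^sub>R laplace_partial T lam f y - f) \<longlongrightarrow> 0) (at_right 0)"
  proof (rule Lim_transform_eventually)
    show "\<forall>\<^sub>F y in at_right 0. (1 / norm (y - 0)) *\<^sub>R
        (laplace_partial T lam f y - (laplace_partial T lam f 0 + (y - 0) *\<^sub>R f)) =
        (1 / y) *\<^sub>R laplace_partial T lam f y - f"
      using eventually_at_right_less[of "0::real"]
      by eventually_elim (simp add: laplace_partial_def algebra_simps)
  qed
  then show ?thesis
    using Lim_null by blast
qed

lemma laplace_generator_limit:
  assumes lam: "lam > 0"
  shows "((\<lambda>h. (1 / h) *\<^sub>R (T h (laplace T lam f) - laplace T lam f))
    \<longlongrightarrow> lam *\<^sub>R laplace T lam f - f) (at_right 0)"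
proof -
  let ?R = "laplace T lam f" and ?J = "laplace_partial T lam f"
  have "((\<lambda>h. (exp (lam * h) - 1) / h) \<longlongrightarrow> lam) (at_right 0)"
    by real_asymp
  moreover have "((\<lambda>h. exp (lam * h)) \<longlongrightarrow> 1) (at_right 0)"
    by real_asymp
  ultimately have "((\<lambda>h. ((exp (lam * h) - 1) / h) *\<^sub>R ?R - exp (lam * h) *\<^sub>R ((1 / h) *\<^sub>R ?J h))
      \<longlongrightarrow> lam *\<^sub>R ?R - 1 *\<^sub>R f) (at_right 0)"
    by (intro tendsto_intros laplace_partial_quotient_tendsto)
  then show ?thesis
    unfolding scaleR_one
  proof (rule Lim_transform_eventually)
    show "\<forall>\<^sub>F h in at_right 0. ((exp (lam * h) - 1) / h) *\<^sub>R ?R - exp (lam * h) *\<^sub>R ((1 / h) *\<^sub>R ?J h) =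
        (1 / h) *\<^sub>R (T h ?R - ?R)"
      using eventually_at_right_less[of "0::real"]
    proof eventually_elim
      case (elim h)
      then have "T h ?R = exp (lam * h) *\<^sub>R ?R - exp (lam * h) *\<^sub>R ?J h"
        using laplace_shift[OF lam, of h f] by (simp add: scaleR_diff_right)
      then show ?case
        by (simp add: scaleR_diff_right scaleR_diff_left scaleR_scaleR diff_divide_distrib)
    qed
  qed
qed

lemma resolvent_eq_laplace: "lam > 0 \<Longrightarrow> resolvent T lam f = laplace T lam f"
  by (rule resolvent_eqI[OF _ laplace_generator_limit])

lemma norm_resolvent_le:
  assumes "lam > 0"
  shows "lam * norm (resolvent T lam f) \<le> norm f"
  using feller_dissipative[OF less_imp_le[OF assms] laplace_generator_limit[OF assms]]
  by (simp add: resolvent_eq_laplace[OF assms])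

lemma norm_scaled_laplace_diff_le:
  assumes lam: "lam > 0" and d: "0 \<le> d"
    and eps: "\<And>t. 0 \<le> t \<Longrightarrow> t \<le> d \<Longrightarrow> norm (T t f - f) \<le> eps"
  shows "norm (lam *\<^sub>R laplace T lam f - f) \<le> eps + 2 * exp (-lam * d) * norm f"
proof -
  let ?R = "laplace T lam f" and ?J = "laplace_partial T lam f d" and ?e = "exp (-lam * d)"
  \<comment> \<open>Split \<open>\<integral>\<^sub>0\<^sup>\<infinity> \<lambda> e\<^sup>-\<^sup>\<lambda>\<^sup>t (T\<^sub>t f - f) dt\<close> at \<open>d\<close>: the part over \<open>[0, d]\<close> is at most \<open>eps\<close>,
    the rest is bounded by the tail of the Laplace integral and \<open>e\<^sup>-\<^sup>\<lambda>\<^sup>d f\<close>.\<close>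
  have "((\<lambda>t. (lam * exp (-lam * t)) *\<^sub>R f) has_integral (1 - ?e) *\<^sub>R f) {0..d}"
    using has_integral_scaleR_left[OF has_integral_exp_decay[OF d, of lam], of f] lam by simp
  then have "((\<lambda>t. lam *\<^sub>R laplace_integrand lam f t - (lam * exp (-lam * t)) *\<^sub>R f)
      has_integral lam *\<^sub>R ?J - (1 - ?e) *\<^sub>R f) {0..d}"
    unfolding laplace_partial_def
    by (rule has_integral_diff[rotated])
       (intro has_integral_cmul integrable_integral laplace_integrand_integrable order.refl)
  then have near_integral: "((\<lambda>t. (lam * exp (-lam * t)) *\<^sub>R (T t f - f))
      has_integral lam *\<^sub>R ?J - (1 - ?e) *\<^sub>R f) {0..d}"
    by (simp add: algebra_simps)
  have "norm (lam *\<^sub>R ?J - (1 - ?e) *\<^sub>R f) =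
      norm (integral {0..d} (\<lambda>t. (lam * exp (-lam * t)) *\<^sub>R (T t f - f)))"
    by (simp only: integral_unique[OF near_integral])
  also have "\<dots> \<le> (exp (-lam * 0) - ?e) * eps"
    by (rule norm_integral_le_exp_decay[OF has_integral_integrable[OF near_integral] d lam])
       (use eps lam in \<open>simp add: mult_left_mono\<close>)
  also have "\<dots> \<le> eps"
    using eps[of 0] d by (simp add: feller_zero algebra_simps)
  finally have near: "norm (lam *\<^sub>R ?J - (1 - ?e) *\<^sub>R f) \<le> eps" .
  have far: "lam * norm (?R - ?J) \<le> ?e * norm f"
    using mult_left_mono[OF norm_laplace_minus_partial_le[OF lam d], of lam] lam by simp
  have "lam *\<^sub>R ?R - f = lam *\<^sub>R (?R - ?J) + (lam *\<^sub>R ?J - (1 - ?e) *\<^sub>R f) - ?e *\<^sub>R f"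
    by (simp add: algebra_simps)
  also have "norm \<dots> \<le> norm (lam *\<^sub>R (?R - ?J)) + norm (lam *\<^sub>R ?J - (1 - ?e) *\<^sub>R f) + norm (?e *\<^sub>R f)"
    by (intro order.trans[OF norm_triangle_ineq4] add_right_mono norm_triangle_ineq)
  also have "\<dots> = lam * norm (?R - ?J) + norm (lam *\<^sub>R ?J - (1 - ?e) *\<^sub>R f) + ?e * norm f"
    using lam by simp
  finally show ?thesis
    using near far by simp
qed

lemma tendsto_scaled_resolvent: "((\<lambda>lam. lam *\<^sub>R resolvent T lam f) \<longlongrightarrow> f) at_top"
proof (rule tendstoI)
  fix e :: real assume e: "e > 0"
  then obtain d where d: "d > 0" "\<And>h. 0 \<le> h \<Longrightarrow> h \<le> d \<Longrightarrow> norm (T h f - f) < e / 2"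
    using feller_modulus_at_0[of "e / 2" f] by auto
  have "((\<lambda>lam. 2 * exp (-lam * d) * norm f) \<longlongrightarrow> 0) at_top"
    using d(1) by real_asymp
  then have "eventually (\<lambda>lam. 2 * exp (-lam * d) * norm f < e / 2) at_top"
    using e by (intro order_tendstoD(2)) auto
  moreover have "eventually (\<lambda>lam::real. lam > 0) at_top"
    by (rule eventually_gt_at_top)
  ultimately show "eventually (\<lambda>lam. dist (lam *\<^sub>R resolvent T lam f) f < e) at_top"
  proof eventually_elim
    case (elim lam)
    then have "norm (lam *\<^sub>R laplace T lam f - f) \<le> e / 2 + 2 * exp (-lam * d) * norm f"
      using d by (intro norm_scaled_laplace_diff_le) (auto intro: less_imp_le)
    with elim show ?case
      by (simp add: dist_norm resolvent_eq_laplace)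
  qed
qed

lemma tendsto_resolvent_0: "((\<lambda>lam. resolvent T lam f) \<longlongrightarrow> 0) at_top"
proof (rule Lim_null_comparison)
  show "eventually (\<lambda>lam. norm (resolvent T lam f) \<le> norm f / lam) at_top"
    using eventually_gt_at_top[of 0]
    by eventually_elim (simp add: pos_le_divide_eq mult.commute norm_resolvent_le)
  show "((\<lambda>lam. norm f / lam) \<longlongrightarrow> 0) at_top"
    by real_asymp
qed

end

theorem corollary1:
  fixes T :: "real \<Rightarrow> ('a::metric_space \<Rightarrow>\<^sub>C real) \<Rightarrow> ('a \<Rightarrow>\<^sub>C real)"
    and l :: "real \<Rightarrow> ('a \<Rightarrow>\<^sub>C real)"
  assumes "compact (UNIV :: 'a set)"
    and "feller_semigroup T"
    and "exit_law_LT T l"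
  shows "(l \<longlongrightarrow> 0) at_top"
proof -
  define u where "u = l 1"
  have l_eq: "l lam = (u - lam *\<^sub>R resolvent T lam u) + resolvent T lam u" if "lam > 0" for lam
    using assms(3) that unfolding exit_law_LT_def u_def by (auto simp: algebra_simps)
  have "((\<lambda>lam. (u - lam *\<^sub>R resolvent T lam u) + resolvent T lam u) \<longlongrightarrow> (u - u) + 0) at_top"
    using assms(2) by (intro tendsto_intros tendsto_scaled_resolvent tendsto_resolvent_0)
  then have "((\<lambda>lam. (u - lam *\<^sub>R resolvent T lam u) + resolvent T lam u) \<longlongrightarrow> 0) at_top"
    by simp
  then show ?thesis
    by (rule Lim_transform_eventually)
       (use eventually_gt_at_top[of "0::real"] in \<open>eventually_elim, simp add: l_eq\<close>)
qed

end
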